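(* Let $0\le k\le n$. The $\mathbb{Z}$-submodule of $\mathbb{Z}[x,y]$ spanned by the Tutte polynomials of all binary matroids of rank $k$ on $n$ elements has rank $k(n-k)+1$, and the same holds for the $\mathbb{Z}$-submodule spanned by the Tutte polynomials of all graphic matroids of rank $k$ on $n$ elements.
   Context: The Tutte polynomial of a matroid $\mathsf{M}$ is $T_{\mathsf{M}}(x,y)\in\mathbb{Z}[x,y]$; the rank of a $\mathbb{Z}$-module is its torsion-free rank. *)

theory Defs
  imports "HOL-Computational_Algebra.Polynomial"
begin

text \<open>Bivariate integer polynomials Z[x,y] are represented as int poly poly,
  i.e. (Z[x])[y]: the outer variable is y, the coefficients are polynomials in x.\<close>

definition varX :: "int poly poly" where "varX = [:[:0, 1:]:]"
definition varY :: "int poly poly" where "varY = [:0, 1:]"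

definition mrank :: "(nat set \<Rightarrow> bool) \<Rightarrow> nat set \<Rightarrow> nat" where
  "mrank I A = Max (card ` {B. B \<subseteq> A \<and> I B})"

definition tutte :: "(nat set \<Rightarrow> bool) \<Rightarrow> nat set \<Rightarrow> int poly poly" where
  "tutte I E = (\<Sum>A\<in>Pow E. (varX - 1) ^ (mrank I E - mrank I A) * (varY - 1) ^ (card A - mrank I A))"

text \<open>Binary matroids: element e is represented by a vector v e over GF(2), encoded as
  the set of coordinates (in nat) where it is 1. A set A is independent iff no nonempty
  subset of the vectors sums to zero over GF(2).\<close>

definition bin_indep :: "(nat \<Rightarrow> nat set) \<Rightarrow> nat set \<Rightarrow> bool" where
  "bin_indep v A \<longleftrightarrow> (\<forall>B\<subseteq>A. B \<noteq> {} \<longrightarrow> {i. odd (card {e\<in>B. i \<in> v e})} \<noteq> {})"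

text \<open>Graphic matroids: a multigraph (loops and parallel edges allowed) with edge e
  joining vertices fst (G e) and snd (G e). A set of edges is independent iff it is a
  forest, i.e. no edge e of A has its endpoints connected by a path in A - {e}
  (in particular, loops are dependent).\<close>

definition adj :: "(nat \<Rightarrow> nat \<times> nat) \<Rightarrow> nat set \<Rightarrow> nat \<Rightarrow> nat \<Rightarrow> bool" where
  "adj G A x y \<longleftrightarrow> (\<exists>e\<in>A. (fst (G e) = x \<and> snd (G e) = y) \<or> (snd (G e) = x \<and> fst (G e) = y))"

definition graph_indep :: "(nat \<Rightarrow> nat \<times> nat) \<Rightarrow> nat set \<Rightarrow> bool" where
  "graph_indep G A \<longleftrightarrow> (\<forall>e\<in>A. \<not> (adj G (A - {e}))\<^sup>*\<^sup>* (fst (G e)) (snd (G e)))"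

text \<open>Tutte polynomials of all binary / graphic matroids of rank k on n elements
  (ground set {0..<n}; every such matroid is isomorphic to one on this ground set).\<close>

definition binary_tutte_polys :: "nat \<Rightarrow> nat \<Rightarrow> int poly poly set" where
  "binary_tutte_polys n k =
     {tutte (bin_indep v) {..<n} | v. mrank (bin_indep v) {..<n} = k}"

definition graphic_tutte_polys :: "nat \<Rightarrow> nat \<Rightarrow> int poly poly set" where
  "graphic_tutte_polys n k =
     {tutte (graph_indep G) {..<n} | G. mrank (graph_indep G) {..<n} = k}"

definition zspan :: "int poly poly set \<Rightarrow> int poly poly set" where
  "zspan S = {(\<Sum>p\<in>T. of_int (c p) * p) | T c. finite T \<and> T \<subseteq> S}"

definition zindep :: "int poly poly set \<Rightarrow> bool" where
  "zindep T \<longleftrightarrow> finite T \<and>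
     (\<forall>c :: int poly poly \<Rightarrow> int. (\<Sum>p\<in>T. of_int (c p) * p) = 0 \<longrightarrow> (\<forall>p\<in>T. c p = 0))"

definition zrank :: "int poly poly set \<Rightarrow> nat" where
  "zrank M = (GREATEST r. \<exists>T. T \<subseteq> M \<and> zindep T \<and> card T = r)"

end

theory Submission
  imports Defs
begin

text \<open>
  Write X = x - 1 and Y = y - 1. For a matroid of rank k on n elements the summand
  X^(k - r(A)) Y^(|A| - r(A)) of the Tutte polynomial differs from the summand
  X^(k - |A|) Y^(|A| - k) of the uniform matroid by X^i Y^j - X^(i - j) Y^(j - i) with
  i = k - r(A) and j = |A| - r(A), which vanishes unless 1 <= i <= k and 1 <= j <= n - k.
  So all these Tutte polynomials lie in the Z-span of k(n - k) + 1 fixed polynomials.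

  Conversely, for a <= k and b <= n - k let M(a, b) consist of a path with k edges, b further
  edges parallel to each other and closing a cycle with the first a path edges, and
  n - k - b loops. It is graphic and binary, and its Tutte polynomial is
  x^k y^(n - k) + (1 - XY) F_a G_b, where F_a and G_b (xpart and ypart below) satisfy
  X F_a = x^k - x^(k - a) and Y G_b = y^(n - k) - y^(n - k - b).
  Its mixed second differences in (a, b) are (1 - XY) x^(k - a) y^(n - k - b); together with
  x^k y^(n - k) they are k(n - k) + 1 independent elements of the span: evaluating at (2, 2)
  kills 1 - XY, and the remaining monomials are independent.
\<close>

section \<open>Z-spans and Z-rank\<close>

lemma zspan_memI:
  "finite T \<Longrightarrow> T \<subseteq> S \<Longrightarrow> p = (\<Sum>x\<in>T. of_int (c x) * x) \<Longrightarrow> p \<in> zspan S"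
  unfolding zspan_def by blast

lemma zspan_zero: "0 \<in> zspan S"
  unfolding zspan_def by (intro CollectI exI[of _ "{}"]) simp

lemma zspan_superset: "p \<in> S \<Longrightarrow> p \<in> zspan S"
  unfolding zspan_def by (intro CollectI exI[of _ "{p}"] exI[of _ "\<lambda>_. 1"]) simp

lemma zcomb_extend:
  fixes c :: "int poly poly \<Rightarrow> int"
  assumes "finite U" "T \<subseteq> U"
  shows "(\<Sum>p\<in>T. of_int (c p) * p) = (\<Sum>p\<in>U. of_int (if p \<in> T then c p else 0) * p)"
  using assms by (intro sum.mono_neutral_cong_left) auto

lemma zspan_add:
  assumes "p \<in> zspan S" "q \<in> zspan S"
  shows "p + q \<in> zspan S"
proof -
  obtain T1 c1 where p: "p = (\<Sum>x\<in>T1. of_int (c1 x) * x)" "finite T1" "T1 \<subseteq> S"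
    using assms(1) unfolding zspan_def by blast
  obtain T2 c2 where q: "q = (\<Sum>x\<in>T2. of_int (c2 x) * x)" "finite T2" "T2 \<subseteq> S"
    using assms(2) unfolding zspan_def by blast
  define c where "c x = (if x \<in> T1 then c1 x else 0) + (if x \<in> T2 then c2 x else 0)" for x
  have U: "finite (T1 \<union> T2)" using p(2) q(2) by simp
  have "p + q = (\<Sum>x\<in>T1 \<union> T2. of_int (if x \<in> T1 then c1 x else 0) * x)
              + (\<Sum>x\<in>T1 \<union> T2. of_int (if x \<in> T2 then c2 x else 0) * x)"
    using zcomb_extend[OF U Un_upper1, of c1] zcomb_extend[OF U Un_upper2, of c2] p(1) q(1)
    by argo
  also have "\<dots> = (\<Sum>x\<in>T1 \<union> T2. of_int (c x) * x)"
    by (simp add: c_def distrib_right sum.distrib[symmetric])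
  finally show ?thesis
    using p(3) q(3) U by (intro zspan_memI) auto
qed

lemma zspan_of_int_mult:
  assumes "p \<in> zspan S"
  shows "of_int a * p \<in> zspan S"
proof -
  obtain T c where p: "p = (\<Sum>x\<in>T. of_int (c x) * x)" "finite T" "T \<subseteq> S"
    using assms unfolding zspan_def by blast
  have "of_int a * p = (\<Sum>x\<in>T. of_int (a * c x) * x)"
    unfolding p by (simp add: sum_distrib_left mult.assoc)
  then show ?thesis
    using p(2,3) by (rule zspan_memI[rotated 2])
qed

lemma zspan_diff: "p \<in> zspan S \<Longrightarrow> q \<in> zspan S \<Longrightarrow> p - q \<in> zspan S"
  using zspan_add[of p S "of_int (-1) * q"] zspan_of_int_mult[of q S "-1"] by simp

lemma zspan_sum: "(\<And>x. x \<in> A \<Longrightarrow> f x \<in> zspan S) \<Longrightarrow> sum f A \<in> zspan S"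
  by (induction A rule: infinite_finite_induct) (auto intro: zspan_zero zspan_add)

lemma zspan_subset_zspan:
  assumes "S \<subseteq> zspan G"
  shows "zspan S \<subseteq> zspan G"
proof
  fix q assume "q \<in> zspan S"
  then obtain T c where "q = (\<Sum>x\<in>T. of_int (c x) * x)" "T \<subseteq> S"
    unfolding zspan_def by blast
  then show "q \<in> zspan G"
    using assms by (auto intro!: zspan_sum zspan_of_int_mult)
qed

lemma zspan_finite_iff:
  assumes "finite G"
  shows "p \<in> zspan G \<longleftrightarrow> (\<exists>c. p = (\<Sum>g\<in>G. of_int (c g) * g))"
proof
  assume "p \<in> zspan G"
  then obtain T c where "p = (\<Sum>x\<in>T. of_int (c x) * x)" "T \<subseteq> G"
    unfolding zspan_def by blast
  with zcomb_extend[OF assms this(2)] show "\<exists>c. p = (\<Sum>g\<in>G. of_int (c g) * g)"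
    by auto
qed (use assms in \<open>auto intro: zspan_memI\<close>)

lemma zindepI:
  assumes "finite T" "\<And>c p. (\<Sum>q\<in>T. of_int (c q) * q) = 0 \<Longrightarrow> p \<in> T \<Longrightarrow> c p = 0"
  shows "zindep T"
  using assms unfolding zindep_def by blast

lemma zindepD: "zindep T \<Longrightarrow> (\<Sum>q\<in>T. of_int (c q) * q) = 0 \<Longrightarrow> p \<in> T \<Longrightarrow> c p = 0"
  unfolding zindep_def by blast

lemma zindep_finite: "zindep T \<Longrightarrow> finite T"
  unfolding zindep_def by blast

lemma int_homogeneous_system_nontrivial_solution:
  fixes w :: "'a \<Rightarrow> 'b \<Rightarrow> int"
  assumes "finite D" "finite S" "card D < card S"
  shows "\<exists>c. (\<exists>i\<in>S. c i \<noteq> 0) \<and> (\<forall>t\<in>D. (\<Sum>i\<in>S. c i * w i t) = 0)"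
  using assms
proof (induction D arbitrary: S w rule: finite_induct)
  case empty
  then obtain i where "i \<in> S" by (metis card.empty card_gt_0_iff ex_in_conv)
  then show ?case by (intro exI[of _ "\<lambda>_. 1"]) auto
next
  case (insert t0 D S w)
  show ?case
  proof (cases "\<forall>i\<in>S. w i t0 = 0")
    case True
    have "card D < card S" using insert by simp
    with insert.IH[OF insert.prems(1)] obtain c where
      "\<exists>i\<in>S. c i \<noteq> 0" "\<forall>t\<in>D. (\<Sum>i\<in>S. c i * w i t) = 0" by blast
    then show ?thesis using True by (intro exI[of _ c]) auto
  next
    case False
    then obtain j where j: "j \<in> S" "w j t0 \<noteq> 0" by auto
    \<comment> \<open>Gaussian elimination of the unknown j, using the equation t0.\<close>
    define w' where "w' i t = w j t0 * w i t - w i t0 * w j t" for i t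
    have "card D < card (S - {j})" using insert j by auto
    with insert.IH[of "S - {j}" w'] insert.prems obtain c where
      c: "\<exists>i\<in>S-{j}. c i \<noteq> 0" "\<forall>t\<in>D. (\<Sum>i\<in>S-{j}. c i * w' i t) = 0" by auto
    define c' where "c' i = (if i = j then - (\<Sum>i\<in>S-{j}. c i * w i t0) else w j t0 * c i)" for i
    have reduce: "(\<Sum>i\<in>S. c' i * w i t) = (\<Sum>i\<in>S-{j}. c i * w' i t)" for t
    proof -
      have "(\<Sum>i\<in>S. c' i * w i t) = c' j * w j t + (\<Sum>i\<in>S-{j}. c' i * w i t)"
        using j insert.prems by (simp add: sum.remove)
      also have "(\<Sum>i\<in>S-{j}. c' i * w i t) = (\<Sum>i\<in>S-{j}. w j t0 * c i * w i t)"
        by (rule sum.cong) (auto simp: c'_def)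
      finally show ?thesis
        by (simp add: c'_def w'_def sum_subtractf sum_distrib_left sum_distrib_right algebra_simps)
    qed
    have "(\<Sum>i\<in>S-{j}. c i * w' i t0) = 0"
      by (simp add: w'_def)
    moreover from c(1) obtain i where "i \<in> S - {j}" "c i \<noteq> 0" by auto
    moreover have "c' i \<noteq> 0" using calculation j by (simp add: c'_def)
    ultimately show ?thesis using reduce c(2) by (intro exI[of _ c']) auto
  qed
qed

lemma zindep_card_le:
  assumes "finite G" "T \<subseteq> zspan G" "zindep T"
  shows "card T \<le> card G"
proof (rule ccontr)
  assume "\<not> ?thesis"
  then have less: "card G < card T" by simp
  have fin: "finite T" using zindep_finite[OF assms(3)] .
  obtain z where z: "\<forall>p\<in>T. p = (\<Sum>g\<in>G. of_int (z p g) * g)"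
    using assms(2) zspan_finite_iff[OF assms(1)] by (metis subsetD)
  obtain c where c: "\<exists>p\<in>T. c p \<noteq> 0" "\<forall>g\<in>G. (\<Sum>p\<in>T. c p * z p g) = 0"
    using int_homogeneous_system_nontrivial_solution[OF assms(1) fin less] by blast
  have "(\<Sum>p\<in>T. of_int (c p) * p) = (\<Sum>p\<in>T. of_int (c p) * (\<Sum>g\<in>G. of_int (z p g) * g))"
    using z by (intro sum.cong) auto
  also have "\<dots> = (\<Sum>g\<in>G. of_int (\<Sum>p\<in>T. c p * z p g) * g)"
    by (simp add: sum_distrib_left sum_distrib_right mult.assoc) (rule sum.swap)
  also have "\<dots> = 0" using c(2) by simp
  finally show False
    using zindepD[OF assms(3)] c(1) by blast
qed

lemma zrank_eqI:
  assumes "\<And>T. T \<subseteq> M \<Longrightarrow> zindep T \<Longrightarrow> card T \<le> d"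
    and "T0 \<subseteq> M" "zindep T0" "card T0 = d"
  shows "zrank M = d"
  unfolding zrank_def by (rule Greatest_equality) (use assms in auto)

definition hereditary :: "(nat set \<Rightarrow> bool) \<Rightarrow> bool" where
  "hereditary I \<longleftrightarrow> I {} \<and> (\<forall>B C. I B \<longrightarrow> C \<subseteq> B \<longrightarrow> I C)"

lemma finite_indep_cards: "finite A \<Longrightarrow> finite (card ` {B. B \<subseteq> A \<and> I B})"
  by (rule finite_imageI) (rule finite_subset[of _ "Pow A"], auto)

lemma mrank_attained:
  assumes "finite A" "I {}"
  obtains B where "B \<subseteq> A" "I B" "card B = mrank I A"
proof -
  have "mrank I A \<in> card ` {B. B \<subseteq> A \<and> I B}"
    unfolding mrank_def using assms finite_indep_cards[OF assms(1)] by (intro Max_in) auto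
  then show ?thesis using that by auto
qed

lemma card_le_mrank:
  assumes "finite A" "B \<subseteq> A" "I B"
  shows "card B \<le> mrank I A"
  unfolding mrank_def using assms finite_indep_cards[OF assms(1)] by (intro Max_ge) auto

lemma mrank_le_card:
  assumes "finite A" "I {}"
  shows "mrank I A \<le> card A"
  by (metis assms card_mono mrank_attained)

lemma mrank_mono:
  assumes "finite A" "I {}" "C \<subseteq> A"
  shows "mrank I C \<le> mrank I A"
proof -
  obtain B where "B \<subseteq> C" "I B" "card B = mrank I C"
    using mrank_attained[of C I] finite_subset[OF assms(3,1)] assms(2) by blast
  then show ?thesis using card_le_mrank[OF assms(1), of B I] assms(3) by auto
qed

lemma mrank_le_mrank_add_card_diff:
  assumes "finite E" "A \<subseteq> E" "hereditary I"
  shows "mrank I E \<le> mrank I A + card (E - A)"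
proof -
  obtain B where B: "B \<subseteq> E" "I B" "card B = mrank I E"
    using mrank_attained[OF assms(1)] assms(3) unfolding hereditary_def by blast
  have "card B \<le> card (B \<inter> A) + card (B - A)"
    by (metis Int_Diff_Un card_Un_le)
  moreover have "card (B \<inter> A) \<le> mrank I A"
    using card_le_mrank[OF finite_subset[OF assms(2,1)], of "B \<inter> A" I] B(2) assms(3)
    unfolding hereditary_def by auto
  moreover have "card (B - A) \<le> card (E - A)"
    using B(1) assms(1) by (intro card_mono) auto
  ultimately show ?thesis using B(3) by linarith
qed

lemma mrank_eqI:
  assumes "finite A" "\<And>B. B \<subseteq> A \<Longrightarrow> I B \<Longrightarrow> card B \<le> r"
    and "B0 \<subseteq> A" "I B0" "card B0 = r"
  shows "mrank I A = r"
  unfolding mrank_def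
proof (rule Max_eqI)
  show "finite (card ` {B. B \<subseteq> A \<and> I B})" using finite_indep_cards[OF assms(1)] .
  show "r \<in> card ` {B. B \<subseteq> A \<and> I B}" using assms(3-5) by blast
qed (use assms(2) in blast)

section \<open>Tutte polynomials of rank k span at most k(n - k) + 1 dimensions\<close>

definition Xm1 :: "int poly poly" where "Xm1 = varX - 1"
definition Ym1 :: "int poly poly" where "Ym1 = varY - 1"

lemma tutte_Xm1_Ym1:
  "tutte I E = (\<Sum>A\<in>Pow E. Xm1 ^ (mrank I E - mrank I A) * Ym1 ^ (card A - mrank I A))"
  by (simp add: tutte_def Xm1_def Ym1_def)

definition uniform_tutte :: "nat \<Rightarrow> nat set \<Rightarrow> int poly poly" where
  "uniform_tutte k E = (\<Sum>A\<in>Pow E. Xm1 ^ (k - card A) * Ym1 ^ (card A - k))"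

definition defect_term :: "nat \<Rightarrow> nat \<Rightarrow> int poly poly" where
  "defect_term i j = Xm1 ^ i * Ym1 ^ j - Xm1 ^ (i - j) * Ym1 ^ (j - i)"

definition tutte_generators :: "nat \<Rightarrow> nat set \<Rightarrow> int poly poly set" where
  "tutte_generators k E =
     insert (uniform_tutte k E) ((\<lambda>(i, j). defect_term i j) ` ({1..k} \<times> {1..card E - k}))"

lemma card_tutte_generators: "card (tutte_generators k E) \<le> k * (card E - k) + 1"
proof -
  have "card ((\<lambda>(i, j). defect_term i j) ` ({1..k} \<times> {1..card E - k})) \<le> k * (card E - k)"
    using card_image_le[of "{1..k} \<times> {1..card E - k}"] by (simp add: card_cartesian_product)
  then show ?thesis
    unfolding tutte_generators_def using card_insert_le_m1 by (simp add: card_insert_if)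
qed

lemma tutte_summand_eq:
  assumes fin: "finite E" and her: "hereditary I" and rk: "mrank I E = k" and A: "A \<subseteq> E"
  defines "i \<equiv> k - mrank I A" and "j \<equiv> card A - mrank I A"
  shows "Xm1 ^ i * Ym1 ^ j = Xm1 ^ (k - card A) * Ym1 ^ (card A - k) + defect_term i j"
    and "i \<le> k" and "j \<le> card E - k"
proof -
  have I0: "I {}" using her by (simp add: hereditary_def)
  have le_card: "mrank I A \<le> card A" using mrank_le_card[of A I] finite_subset[OF A fin] I0 by blast
  have le_k: "mrank I A \<le> k" using mrank_mono[of E I A, OF fin I0 A] rk by simp
  have "k \<le> mrank I A + card (E - A)" using mrank_le_mrank_add_card_diff[OF fin A her] rk by simp
  moreover have "card E = card A + card (E - A)"
    using fin A by (metis card_Diff_subset finite_subset le_add_diff_inverse card_mono)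
  ultimately show "i \<le> k" "j \<le> card E - k" by (auto simp: i_def j_def)
  have "i - j = k - card A" "j - i = card A - k" using le_card le_k by (auto simp: i_def j_def)
  then show "Xm1 ^ i * Ym1 ^ j = Xm1 ^ (k - card A) * Ym1 ^ (card A - k) + defect_term i j"
    by (simp add: defect_term_def)
qed

lemma defect_term_in_zspan:
  assumes "i \<le> k" "j \<le> card E - k"
  shows "defect_term i j \<in> zspan (tutte_generators k E)"
proof (cases "i = 0 \<or> j = 0")
  case True
  then have "defect_term i j = 0" by (auto simp: defect_term_def)
  then show ?thesis by (simp add: zspan_zero)
next
  case False
  then have "defect_term i j \<in> tutte_generators k E"
    using assms unfolding tutte_generators_def by force
  then show ?thesis by (rule zspan_superset)
qed

lemma tutte_in_zspan_generators:
  assumes "finite E" "hereditary I" "mrank I E = k"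
  shows "tutte I E \<in> zspan (tutte_generators k E)"
proof -
  let ?d = "\<lambda>A. defect_term (k - mrank I A) (card A - mrank I A)"
  have "tutte I E = uniform_tutte k E + (\<Sum>A\<in>Pow E. ?d A)"
    unfolding tutte_Xm1_Ym1 uniform_tutte_def assms(3) sum.distrib[symmetric]
    using tutte_summand_eq(1)[OF assms] by (intro sum.cong) auto
  moreover have "uniform_tutte k E \<in> zspan (tutte_generators k E)"
    by (simp add: tutte_generators_def zspan_superset)
  moreover have "?d A \<in> zspan (tutte_generators k E)" if "A \<in> Pow E" for A
    using that tutte_summand_eq(2,3)[OF assms] by (intro defect_term_in_zspan) auto
  ultimately show ?thesis by (auto intro!: zspan_add zspan_sum)
qed

lemma card_zindep_tutte_le:
  assumes "\<And>p. p \<in> S \<Longrightarrow> \<exists>I. hereditary I \<and> mrank I {..<n} = k \<and> p = tutte I {..<n}"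
    and "T \<subseteq> zspan S" "zindep T"
  shows "card T \<le> k * (n - k) + 1"
proof -
  let ?G = "tutte_generators k {..<n}"
  have "S \<subseteq> zspan ?G" using assms(1) tutte_in_zspan_generators[of "{..<n}"] by blast
  then have "T \<subseteq> zspan ?G" using zspan_subset_zspan assms(2) by blast
  then have "card T \<le> card ?G"
    by (rule zindep_card_le[rotated]) (simp_all add: tutte_generators_def assms(3))
  also have "\<dots> \<le> k * (n - k) + 1" using card_tutte_generators[of k "{..<n}"] by simp
  finally show ?thesis .
qed

section \<open>The matroids M(a, b)\<close>

lemma sum_Pow_Un_disjoint_mult:
  fixes f g :: "'a set \<Rightarrow> 'c::comm_semiring_1"
  assumes "finite K" "finite L" "K \<inter> L = {}"
  shows "(\<Sum>A\<in>Pow (K \<union> L). f (A \<inter> K) * g (A \<inter> L)) = (\<Sum>A\<in>Pow K. f A) * (\<Sum>B\<in>Pow L. g B)"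
proof -
  have "(\<Sum>A\<in>Pow (K \<union> L). f (A \<inter> K) * g (A \<inter> L)) = (\<Sum>(A, B)\<in>Pow K \<times> Pow L. f A * g B)"
    by (rule sum.reindex_bij_witness[where i = "\<lambda>(A, B). A \<union> B" and j = "\<lambda>A. (A \<inter> K, A \<inter> L)"])
      (use assms(3) in auto)
  also have "\<dots> = (\<Sum>A\<in>Pow K. f A) * (\<Sum>B\<in>Pow L. g B)"
    by (simp add: sum_product sum.cartesian_product)
  finally show ?thesis .
qed

lemma sum_Pow_Un_disjoint_fixed:
  fixes g :: "'a set \<Rightarrow> 'c::comm_semiring_1"
  assumes "finite K" "finite L" "K \<inter> L = {}" "C \<subseteq> K"
  shows "(\<Sum>A\<in>Pow (K \<union> L). if A \<inter> K = C then g (A \<inter> L) else 0) = (\<Sum>B\<in>Pow L. g B)"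
  using sum_Pow_Un_disjoint_mult[OF assms(1-3), of "\<lambda>A. if A = C then 1 else 0" g] assms(1,4)
  by (simp add: if_distrib[of "\<lambda>x. x * _"] cong: if_cong)

lemma sum_Pow_binomial:
  fixes u w :: "'c::comm_semiring_1"
  assumes "finite K"
  shows "(\<Sum>A\<in>Pow K. u ^ card A * w ^ (card K - card A)) = (u + w) ^ card K"
proof -
  have "(u + w) ^ card K = (\<Sum>X\<in>Pow K. (\<Prod>x\<in>X. u) * (\<Prod>x\<in>K - X. w))"
    using prod_add[OF assms, of "\<lambda>_. u" "\<lambda>_. w"] by simp
  also have "\<dots> = (\<Sum>A\<in>Pow K. u ^ card A * w ^ (card K - card A))"
    using assms by (intro sum.cong) (auto simp: card_Diff_subset finite_subset)
  finally show ?thesis by simp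
qed

lemma sum_Pow_Xm1_power: "finite K \<Longrightarrow> (\<Sum>A\<in>Pow K. Xm1 ^ (card K - card A)) = varX ^ card K"
  using sum_Pow_binomial[of K 1 Xm1] by (simp add: Xm1_def)

lemma sum_Pow_Ym1_power: "finite K \<Longrightarrow> (\<Sum>A\<in>Pow K. Ym1 ^ card A) = varY ^ card K"
  using sum_Pow_binomial[of K Ym1 1] by (simp add: Ym1_def)

lemma card_split_at:
  fixes k n :: nat
  assumes "A \<subseteq> {..<n}" "k \<le> n"
  shows "card A = card (A \<inter> {..<k}) + card (A \<inter> {k..<n})"
proof -
  have "A - {..<k} = A \<inter> {k..<n}" using assms(1) by auto
  then show ?thesis using card_Int_Diff[of A "{..<k}"] finite_subset[OF assms(1)] by simp
qed

text \<open>M(a, b): the elements below k form a basis, the elements of {k..<k+b} are parallel to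
  each other and form circuits with {..<a}, the remaining elements are loops.\<close>

definition witness_indep :: "nat \<Rightarrow> nat \<Rightarrow> nat \<Rightarrow> nat set \<Rightarrow> bool" where
  "witness_indep k a b A \<longleftrightarrow> A \<subseteq> {..<k+b} \<and> card (A \<inter> {k..<k+b}) \<le> 1
     \<and> \<not> ({..<a} \<subseteq> A \<and> A \<inter> {k..<k+b} \<noteq> {})"

definition witness_rank :: "nat \<Rightarrow> nat \<Rightarrow> nat \<Rightarrow> nat set \<Rightarrow> nat" where
  "witness_rank k a b A =
     card (A \<inter> {..<k}) + (if A \<inter> {k..<k+b} \<noteq> {} \<and> \<not> {..<a} \<subseteq> A then 1 else 0)"

lemma card_witness_indep_le:
  assumes "a \<le> k" "finite A" "B \<subseteq> A" "witness_indep k a b B"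
  shows "card B \<le> witness_rank k a b A"
proof -
  have K: "card (B \<inter> {..<k}) \<le> card (A \<inter> {..<k})"
    using assms by (intro card_mono) auto
  have cB: "card B = card (B \<inter> {..<k}) + card (B \<inter> {k..<k+b})"
    using assms(4) by (intro card_split_at) (auto simp: witness_indep_def)
  show ?thesis
  proof (cases "B \<inter> {k..<k+b} = {}")
    case True
    then show ?thesis using K cB by (simp add: witness_rank_def)
  next
    case False
    then have one: "card (B \<inter> {k..<k+b}) = 1"
      using assms(4) by (simp add: witness_indep_def le_Suc_eq)
    have "\<not> {..<a} \<subseteq> B" using assms(4) False by (auto simp: witness_indep_def)
    show ?thesis
    proof (cases "{..<a} \<subseteq> A")
      case True
      then obtain p where "p < a" "p \<in> A" "p \<notin> B" using \<open>\<not> {..<a} \<subseteq> B\<close> by auto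
      then have "B \<inter> {..<k} \<subset> A \<inter> {..<k}" using assms by auto
      then have "card (B \<inter> {..<k}) < card (A \<inter> {..<k})"
        using assms(2) by (intro psubset_card_mono) auto
      then show ?thesis using one cB by (simp add: witness_rank_def)
    next
      case False
      moreover have "A \<inter> {k..<k+b} \<noteq> {}" using \<open>B \<inter> {k..<k+b} \<noteq> {}\<close> assms(3) by blast
      ultimately show ?thesis
        using K one cB by (simp add: witness_rank_def)
    qed
  qed
qed

lemma witness_rank_attained:
  assumes "finite A"
  obtains B where "B \<subseteq> A" "witness_indep k a b B" "card B = witness_rank k a b A"
proof (cases "A \<inter> {k..<k+b} \<noteq> {} \<and> \<not> {..<a} \<subseteq> A")
  case True
  then obtain e where e: "e \<in> A" "k \<le> e" "e < k + b" by auto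
  let ?B = "insert e (A \<inter> {..<k})"
  have "?B \<inter> {k..<k+b} = {e}" "?B \<subseteq> {..<k+b}" using e by auto
  moreover have "\<not> {..<a} \<subseteq> ?B"
    using True e(1) by blast
  ultimately have "witness_indep k a b ?B"
    unfolding witness_indep_def by simp
  moreover have "card ?B = card (A \<inter> {..<k}) + 1"
    using assms e(2) by simp
  ultimately show ?thesis
    using that[of ?B] e(1) True by (simp add: witness_rank_def)
next
  case False
  have "A \<inter> {..<k} \<inter> {k..<k+b} = {}" "A \<inter> {..<k} \<subseteq> {..<k+b}" by auto
  then have "witness_indep k a b (A \<inter> {..<k})" by (simp add: witness_indep_def)
  then show ?thesis using that[of "A \<inter> {..<k}"] False by (simp add: witness_rank_def)
qed

lemma mrank_witness_indep:
  assumes "a \<le> k" "finite A"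
  shows "mrank (witness_indep k a b) A = witness_rank k a b A"
proof -
  obtain B where "B \<subseteq> A" "witness_indep k a b B" "card B = witness_rank k a b A"
    using assms(2) by (rule witness_rank_attained)
  with assms show ?thesis
    by (intro mrank_eqI[of A _ _ B]) (auto intro: card_witness_indep_le)
qed

definition xpart_term :: "nat \<Rightarrow> nat \<Rightarrow> nat set \<Rightarrow> int poly poly" where
  "xpart_term k a A = (if \<not> {..<a} \<subseteq> A then Xm1 ^ (k - card A - 1) else 0)"

definition ypart_term :: "nat \<Rightarrow> nat \<Rightarrow> nat set \<Rightarrow> int poly poly" where
  "ypart_term k b B = (if B \<inter> {k..<k+b} \<noteq> {} then Ym1 ^ (card B - 1) else 0)"

definition xpart :: "nat \<Rightarrow> nat \<Rightarrow> int poly poly" where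
  "xpart k a = (\<Sum>A\<in>Pow {..<k}. xpart_term k a A)"

definition ypart :: "nat \<Rightarrow> nat \<Rightarrow> nat \<Rightarrow> int poly poly" where
  "ypart n k b = (\<Sum>B\<in>Pow {k..<n}. ypart_term k b B)"

definition witness_tutte :: "nat \<Rightarrow> nat \<Rightarrow> nat \<Rightarrow> nat \<Rightarrow> int poly poly" where
  "witness_tutte n k a b = varX ^ k * varY ^ (n - k) + (1 - Xm1 * Ym1) * xpart k a * ypart n k b"

text \<open>If the parallel class raises the rank of A by one, the identity
  X^i Y^j = X^(i+1) Y^(j+1) + (1 - XY) X^i Y^j splits the summand of A into the summand of the
  free matroid on {..<k} plus loops, and a product of a term depending on A \<inter> {..<k} only and
  one depending on A \<inter> {k..<n} only.\<close>

lemma witness_tutte_summand: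
  assumes "a \<le> k" "k + b \<le> n" "A \<subseteq> {..<n}"
  defines "r \<equiv> witness_rank k a b A"
  shows "Xm1 ^ (k - r) * Ym1 ^ (card A - r)
       = Xm1 ^ (card {..<k} - card (A \<inter> {..<k})) * Ym1 ^ card (A \<inter> {k..<n})
         + (1 - Xm1 * Ym1) * (xpart_term k a (A \<inter> {..<k}) * ypart_term k b (A \<inter> {k..<n}))"
proof -
  let ?K = "{..<k}" and ?L = "{k..<n}" and ?P = "{k..<k+b}"
  have fA: "finite A" using assms(3) finite_subset by blast
  have cA: "card A = card (A \<inter> ?K) + card (A \<inter> ?L)"
    using assms(2,3) by (intro card_split_at) auto
  have PL: "?P \<subseteq> ?L" using assms(2) by auto
  show ?thesis
  proof (cases "A \<inter> ?P \<noteq> {} \<and> \<not> {..<a} \<subseteq> A")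
    case True
    obtain p where "p < a" "p \<notin> A" using True by auto
    then have "A \<inter> ?K \<noteq> ?K" using assms(1) by (metis IntE lessThan_iff order_less_le_trans)
    then have "card (A \<inter> ?K) < card ?K" by (intro psubset_card_mono) auto
    then have "0 < k - card (A \<inter> ?K)" by simp
    then obtain i where i: "k - card (A \<inter> ?K) = Suc i" using gr0_implies_Suc by blast
    have P: "A \<inter> ?L \<inter> ?P \<noteq> {}" using True PL by blast
    then have "card (A \<inter> ?L) \<noteq> 0" using fA by auto
    then obtain j where j: "card (A \<inter> ?L) = Suc j" using not0_implies_Suc by blast
    have "r = card (A \<inter> ?K) + 1" using True by (simp add: r_def witness_rank_def)
    then have exps: "k - r = i" "card A - r = j" "card ?K - card (A \<inter> ?K) = Suc i"
      using i j cA by auto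
    have "\<not> {..<a} \<subseteq> A \<inter> ?K" using True by blast
    then have "xpart_term k a (A \<inter> ?K) = Xm1 ^ i" "ypart_term k b (A \<inter> ?L) = Ym1 ^ j"
      using i j P by (simp_all add: xpart_term_def ypart_term_def)
    then show ?thesis
      using exps j by (simp add: algebra_simps)
  next
    case False
    then have r: "r = card (A \<inter> ?K)" by (simp add: r_def witness_rank_def)
    have "{..<a} \<subseteq> A \<inter> ?K \<or> A \<inter> ?L \<inter> ?P = {}"
      using False assms(1) by auto
    then have "xpart_term k a (A \<inter> ?K) * ypart_term k b (A \<inter> ?L) = 0"
      by (auto simp: xpart_term_def ypart_term_def)
    then show ?thesis using r cA by simp
  qed
qed

lemma tutte_witness_indep:
  assumes "a \<le> k" "k + b \<le> n"
  shows "tutte (witness_indep k a b) {..<n} = witness_tutte n k a b"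
proof -
  let ?K = "{..<k}" and ?L = "{k..<n}"
  let ?f = "xpart_term k a" and ?g = "ypart_term k b"
  have KL: "?K \<union> ?L = {..<n}" "?K \<inter> ?L = {}" using assms(2) by auto
  have rank: "mrank (witness_indep k a b) A = witness_rank k a b A" if "A \<subseteq> {..<n}" for A
    using mrank_witness_indep[OF assms(1)] finite_subset[OF that] by simp
  have "{..<n} \<inter> ?K = ?K" "{..<a} \<subseteq> {..<n}" using assms by auto
  then have full: "witness_rank k a b {..<n} = k"
    by (simp add: witness_rank_def)
  have "tutte (witness_indep k a b) {..<n}
      = (\<Sum>A\<in>Pow {..<n}. Xm1 ^ (card ?K - card (A \<inter> ?K)) * Ym1 ^ card (A \<inter> ?L)
                          + (1 - Xm1 * Ym1) * (?f (A \<inter> ?K) * ?g (A \<inter> ?L)))"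
    unfolding tutte_Xm1_Ym1 rank[OF order_refl] full
  proof (rule sum.cong)
    fix A assume "A \<in> Pow {..<n}"
    then have A: "A \<subseteq> {..<n}" by simp
    show "Xm1 ^ (k - mrank (witness_indep k a b) A) * Ym1 ^ (card A - mrank (witness_indep k a b) A)
      = Xm1 ^ (card ?K - card (A \<inter> ?K)) * Ym1 ^ card (A \<inter> ?L)
        + (1 - Xm1 * Ym1) * (?f (A \<inter> ?K) * ?g (A \<inter> ?L))"
      unfolding rank[OF A] by (rule witness_tutte_summand[OF assms A])
  qed simp
  also have "\<dots> = (\<Sum>A\<in>Pow ?K. Xm1 ^ (card ?K - card A)) * (\<Sum>B\<in>Pow ?L. Ym1 ^ card B)
        + (1 - Xm1 * Ym1) * (xpart k a * ypart n k b)"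
    unfolding sum.distrib sum_distrib_left[symmetric] xpart_def ypart_def
    using sum_Pow_Un_disjoint_mult[of ?K ?L "\<lambda>A. Xm1 ^ (card ?K - card A)" "\<lambda>B. Ym1 ^ card B"]
      sum_Pow_Un_disjoint_mult[of ?K ?L ?f ?g] unfolding KL by simp
  also have "\<dots> = witness_tutte n k a b"
    using sum_Pow_Xm1_power[of ?K] sum_Pow_Ym1_power[of ?L] by (simp add: witness_tutte_def mult.assoc)
  finally show ?thesis .
qed

lemma Xm1_mult_xpart:
  assumes "a \<le> k"
  shows "Xm1 * xpart k a = varX ^ k - varX ^ (k - a)"
proof -
  let ?K = "{..<k}" and ?P = "{..<a}" and ?Q = "{a..<k}"
  have PQ: "?P \<union> ?Q = ?K" "?P \<inter> ?Q = {}" using assms by auto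
  have "Xm1 * xpart k a = (\<Sum>A\<in>Pow ?K. if \<not> ?P \<subseteq> A then Xm1 ^ (k - card A) else 0)"
    unfolding xpart_def sum_distrib_left
  proof (rule sum.cong)
    fix A assume A: "A \<in> Pow ?K"
    show "Xm1 * xpart_term k a A = (if \<not> ?P \<subseteq> A then Xm1 ^ (k - card A) else 0)"
    proof (cases "?P \<subseteq> A")
      case False
      then have "A \<noteq> ?K" using assms by auto
      then have "card A < card ?K" using A by (intro psubset_card_mono) auto
      then have "k - card A = Suc (k - card A - 1)" by simp
      then show ?thesis using False by (simp add: xpart_term_def)
    qed (simp add: xpart_term_def)
  qed simp
  also have "\<dots> = (\<Sum>A\<in>Pow ?K. Xm1 ^ (card ?K - card A))
                 - (\<Sum>A\<in>Pow (?P \<union> ?Q). if A \<inter> ?P = ?P then Xm1 ^ (card ?Q - card (A \<inter> ?Q)) else 0)"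
    unfolding PQ(1) sum_subtractf[symmetric]
  proof (rule sum.cong)
    fix A assume A: "A \<in> Pow ?K"
    have "card A = card ?P + card (A \<inter> ?Q)" if "?P \<subseteq> A"
    proof -
      have "card A = card (?P \<union> (A \<inter> ?Q))"
        using that A PQ(1) by (intro arg_cong[where f = card]) auto
      also have "\<dots> = card ?P + card (A \<inter> ?Q)" by (rule card_Un_disjoint) auto
      finally show ?thesis .
    qed
    then show "(if \<not> ?P \<subseteq> A then Xm1 ^ (k - card A) else 0)
      = Xm1 ^ (card ?K - card A) - (if A \<inter> ?P = ?P then Xm1 ^ (card ?Q - card (A \<inter> ?Q)) else 0)"
      by (auto simp: Int_absorb1)
  qed simp
  also have "\<dots> = varX ^ k - varX ^ (k - a)"
    using sum_Pow_Xm1_power[of ?K] sum_Pow_Xm1_power[of ?Q] PQ(2)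
      sum_Pow_Un_disjoint_fixed[of ?P ?Q ?P "\<lambda>B. Xm1 ^ (card ?Q - card B)"] by simp
  finally show ?thesis .
qed

lemma Ym1_mult_ypart:
  assumes "k + b \<le> n"
  shows "Ym1 * ypart n k b = varY ^ (n - k) - varY ^ (n - k - b)"
proof -
  let ?L = "{k..<n}" and ?P = "{k..<k+b}" and ?Q = "{k+b..<n}"
  have PQ: "?P \<union> ?Q = ?L" "?P \<inter> ?Q = {}" using assms by auto
  have "Ym1 * ypart n k b = (\<Sum>B\<in>Pow ?L. if B \<inter> ?P \<noteq> {} then Ym1 ^ card B else 0)"
    unfolding ypart_def sum_distrib_left
  proof (rule sum.cong)
    fix B assume B: "B \<in> Pow ?L"
    show "Ym1 * ypart_term k b B = (if B \<inter> ?P \<noteq> {} then Ym1 ^ card B else 0)"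
    proof (cases "B \<inter> ?P = {}")
      case False
      then have "card B \<noteq> 0" using B finite_subset by fastforce
      then obtain j where "card B = Suc j" using not0_implies_Suc by blast
      then show ?thesis using False by (simp add: ypart_term_def)
    qed (simp add: ypart_term_def)
  qed simp
  also have "\<dots> = (\<Sum>B\<in>Pow ?L. Ym1 ^ card B)
                 - (\<Sum>B\<in>Pow (?P \<union> ?Q). if B \<inter> ?P = {} then Ym1 ^ card (B \<inter> ?Q) else 0)"
    unfolding PQ(1) sum_subtractf[symmetric]
  proof (rule sum.cong)
    fix B assume B: "B \<in> Pow ?L"
    have "B \<inter> ?Q = B" if "B \<inter> ?P = {}" using that B PQ(1) by blast
    then show "(if B \<inter> ?P \<noteq> {} then Ym1 ^ card B else 0)
      = Ym1 ^ card B - (if B \<inter> ?P = {} then Ym1 ^ card (B \<inter> ?Q) else 0)"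
      by auto
  qed simp
  also have "\<dots> = varY ^ (n - k) - varY ^ (n - k - b)"
    using sum_Pow_Ym1_power[of ?L] sum_Pow_Ym1_power[of ?Q] PQ(2)
      sum_Pow_Un_disjoint_fixed[of ?P ?Q "{}" "\<lambda>B. Ym1 ^ card B"] by (simp add: diff_diff_left)
  finally show ?thesis .
qed

section \<open>Independence of the second differences\<close>

definition eval2 :: "int poly poly \<Rightarrow> int \<Rightarrow> int \<Rightarrow> int" where
  "eval2 p x y = poly (poly p [:y:]) x"

lemma eval2_simps [simp]:
  "eval2 (p + q) x y = eval2 p x y + eval2 q x y"
  "eval2 (p - q) x y = eval2 p x y - eval2 q x y"
  "eval2 (p * q) x y = eval2 p x y * eval2 q x y"
  "eval2 (p ^ m) x y = eval2 p x y ^ m"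
  "eval2 0 x y = 0" "eval2 1 x y = 1" "eval2 (of_int c) x y = c"
  "eval2 varX x y = x" "eval2 varY x y = y"
  "eval2 Xm1 x y = x - 1" "eval2 Ym1 x y = y - 1"
  "eval2 (sum f A) x y = (\<Sum>a\<in>A. eval2 (f a) x y)"
  by (simp_all add: eval2_def varX_def varY_def Xm1_def Ym1_def of_int_poly poly_sum)

lemma Xm1_nonzero: "Xm1 \<noteq> 0"
  by (rule notI, drule arg_cong[where f = "\<lambda>p. eval2 p 2 2"]) simp

lemma Ym1_nonzero: "Ym1 \<noteq> 0"
  by (rule notI, drule arg_cong[where f = "\<lambda>p. eval2 p 2 2"]) simp

lemma xpart_diff:
  assumes "1 \<le> a" "a \<le> k"
  shows "xpart k a - xpart k (a - 1) = varX ^ (k - a)"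
proof -
  have "Xm1 * (xpart k a - xpart k (a - 1)) = varX ^ Suc (k - a) - varX ^ (k - a)"
    using Xm1_mult_xpart[of a k] Xm1_mult_xpart[of "a - 1" k] assms
    by (simp add: right_diff_distrib Suc_diff_le)
  also have "\<dots> = Xm1 * varX ^ (k - a)"
    by (simp add: Xm1_def algebra_simps)
  finally show ?thesis using Xm1_nonzero by simp
qed

lemma ypart_diff:
  assumes "1 \<le> b" "k + b \<le> n"
  shows "ypart n k b - ypart n k (b - 1) = varY ^ (n - k - b)"
proof -
  have "Ym1 * (ypart n k b - ypart n k (b - 1)) = varY ^ Suc (n - k - b) - varY ^ (n - k - b)"
    using Ym1_mult_ypart[of k b n] Ym1_mult_ypart[of k "b - 1" n] assms
    by (simp add: right_diff_distrib Suc_diff_le)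
  also have "\<dots> = Ym1 * varY ^ (n - k - b)"
    by (simp add: Ym1_def algebra_simps)
  finally show ?thesis using Ym1_nonzero by simp
qed

lemma monomial_eq_monom: "varX ^ i * varY ^ j = monom (monom 1 i) j"
proof -
  have "varY ^ j = monom 1 j" by (simp add: varY_def monom_altdef)
  moreover have "varX ^ i = [:monom 1 i:]" by (simp add: varX_def poly_const_pow monom_altdef)
  ultimately show ?thesis by (simp add: smult_monom)
qed

lemma coeff_coeff_monomial:
  "coeff (coeff (varX ^ i * varY ^ j) j') i' = (if i = i' \<and> j = j' then 1 else 0)"
  unfolding monomial_eq_monom by simp

lemma inj_monomial: "inj (\<lambda>(i, j). varX ^ i * varY ^ j)"
proof (rule injI, clarify)
  fix i j i' j' :: nat assume "varX ^ i * varY ^ j = varX ^ i' * varY ^ j'"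
  then have "coeff (coeff (varX ^ i * varY ^ j) j') i' = 1"
    by (simp add: coeff_coeff_monomial)
  then show "i = i' \<and> j = j'" by (simp add: coeff_coeff_monomial split: if_splits)
qed

lemma zindep_monomials:
  assumes "finite D"
  shows "zindep ((\<lambda>(i, j). varX ^ i * varY ^ j) ` D)"
proof (rule zindepI)
  let ?M = "(\<lambda>(i, j). varX ^ i * varY ^ j) ` D"
  show "finite ?M" using assms by simp
  fix c :: "int poly poly \<Rightarrow> int" and p
  assume sum0: "(\<Sum>q\<in>?M. of_int (c q) * q) = 0" and "p \<in> ?M"
  then obtain i j where p: "p = varX ^ i * varY ^ j" by auto
  have coeff_q: "coeff (coeff (of_int (c q) * q) j) i = (if q = p then c q else 0)"
    if qM: "q \<in> ?M" for q
  proof -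
    obtain i' j' where q: "q = varX ^ i' * varY ^ j'" using qM by auto
    then have "q = p \<longleftrightarrow> i' = i \<and> j' = j"
      unfolding p using injD[OF inj_monomial, of "(i', j')" "(i, j)"] by auto
    then show ?thesis unfolding q by (simp add: coeff_coeff_monomial of_int_poly)
  qed
  have "coeff (coeff (\<Sum>q\<in>?M. of_int (c q) * q) j) i = (\<Sum>q\<in>?M. if q = p then c q else 0)"
    unfolding coeff_sum by (rule sum.cong[OF refl coeff_q])
  then show "c p = 0" using sum0 assms \<open>p \<in> ?M\<close> by simp
qed

lemma zindep_image_mult:
  assumes "c \<noteq> 0" "zindep T"
  shows "zindep ((\<lambda>p. c * p) ` T)"
proof (rule zindepI)
  show "finite ((\<lambda>p. c * p) ` T)" using zindep_finite[OF assms(2)] by simp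
  have inj: "inj_on (\<lambda>p. c * p) T" using assms(1) by (auto intro: inj_onI)
  fix d :: "int poly poly \<Rightarrow> int" and q
  assume "(\<Sum>q\<in>(\<lambda>p. c * p) ` T. of_int (d q) * q) = 0" and q: "q \<in> (\<lambda>p. c * p) ` T"
  then have "c * (\<Sum>p\<in>T. of_int (d (c * p)) * p) = 0"
    by (simp add: sum.reindex[OF inj] sum_distrib_left mult.left_commute)
  then have "(\<Sum>p\<in>T. of_int (d (c * p)) * p) = 0" using assms(1) by simp
  moreover obtain p where "p \<in> T" "q = c * p" using q by blast
  ultimately show "d q = 0" using zindepD[OF assms(2), of "\<lambda>p. d (c * p)"] by blast
qed

lemma zindep_insert_eval2:
  assumes "zindep T" "\<And>p. p \<in> T \<Longrightarrow> eval2 p x y = 0" "eval2 q x y \<noteq> 0"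
  shows "zindep (insert q T)"
proof (rule zindepI)
  have fin: "finite T" and q: "q \<notin> T" using assms zindep_finite by auto
  then show "finite (insert q T)" by simp
  fix c :: "int poly poly \<Rightarrow> int" and p
  assume "(\<Sum>p\<in>insert q T. of_int (c p) * p) = 0" and p: "p \<in> insert q T"
  then have sum0: "of_int (c q) * q + (\<Sum>p\<in>T. of_int (c p) * p) = 0" using fin q by simp
  have "c q * eval2 q x y = 0"
    using arg_cong[OF sum0, of "\<lambda>p. eval2 p x y"] assms(2) by simp
  then have "c q = 0" using assms(3) by simp
  then show "c p = 0" using p sum0 zindepD[OF assms(1)] by auto
qed

lemma tutte_correction_nonzero: "1 - Xm1 * Ym1 \<noteq> 0"
  by (rule notI, drule arg_cong[where f = "\<lambda>p. eval2 p 1 1"]) simp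

definition witness_basis :: "nat \<Rightarrow> nat \<Rightarrow> int poly poly set" where
  "witness_basis n k = insert (varX ^ k * varY ^ (n - k))
     ((\<lambda>p. (1 - Xm1 * Ym1) * p) ` (\<lambda>(i, j). varX ^ i * varY ^ j) ` ({..<k} \<times> {..<n - k}))"

text \<open>Evaluation at (2, 2) kills the factor 1 - (x - 1)(y - 1) but not the first element.\<close>

lemma zindep_witness_basis: "zindep (witness_basis n k)"
  unfolding witness_basis_def
  by (rule zindep_insert_eval2[where x = 2 and y = 2,
        OF zindep_image_mult[OF tutte_correction_nonzero zindep_monomials]]) auto

lemma card_witness_basis: "card (witness_basis n k) = k * (n - k) + 1"
proof -
  let ?M = "(\<lambda>p. (1 - Xm1 * Ym1) * p) ` (\<lambda>(i, j). varX ^ i * varY ^ j) ` ({..<k} \<times> {..<n - k})"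
  have "inj_on ((\<lambda>p. (1 - Xm1 * Ym1) * p) \<circ> (\<lambda>(i, j). varX ^ i * varY ^ j)) ({..<k} \<times> {..<n - k})"
    using inj_monomial tutte_correction_nonzero
    by (intro comp_inj_on inj_on_subset[OF inj_monomial] inj_onI) auto
  then have "card ?M = card ({..<k} \<times> {..<n - k})"
    by (subst image_comp) (rule card_image)
  then have "card ?M = k * (n - k)"
    by (simp add: card_cartesian_product)
  moreover have "varX ^ k * varY ^ (n - k) \<notin> ?M"
  proof
    assume "varX ^ k * varY ^ (n - k) \<in> ?M"
    then obtain p where "varX ^ k * varY ^ (n - k) = (1 - Xm1 * Ym1) * p" by blast
    then have "eval2 (varX ^ k * varY ^ (n - k)) 2 2 = eval2 ((1 - Xm1 * Ym1) * p) 2 2"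
      by (rule arg_cong)
    then show False by simp
  qed
  ultimately show ?thesis by (simp add: witness_basis_def)
qed

lemma witness_tutte_0: "witness_tutte n k 0 b = varX ^ k * varY ^ (n - k)"
  by (simp add: witness_tutte_def xpart_def xpart_term_def)

lemma witness_tutte_second_difference:
  assumes "1 \<le> a" "a \<le> k" "1 \<le> b" "k + b \<le> n"
  shows "witness_tutte n k a b - witness_tutte n k (a - 1) b - witness_tutte n k a (b - 1)
           + witness_tutte n k (a - 1) (b - 1)
         = (1 - Xm1 * Ym1) * (varX ^ (k - a) * varY ^ (n - k - b))"
proof -
  have "witness_tutte n k a b - witness_tutte n k (a - 1) b - witness_tutte n k a (b - 1)
           + witness_tutte n k (a - 1) (b - 1)
        = (1 - Xm1 * Ym1) * ((xpart k a - xpart k (a - 1)) * (ypart n k b - ypart n k (b - 1)))"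
    by (simp add: witness_tutte_def algebra_simps)
  then show ?thesis using xpart_diff[of a k] ypart_diff[of b k n] assms by simp
qed

lemma witness_basis_subset_zspan:
  assumes "\<And>a b. a \<le> k \<Longrightarrow> b \<le> n - k \<Longrightarrow> witness_tutte n k a b \<in> S"
  shows "witness_basis n k \<subseteq> zspan S"
proof -
  have "varX ^ k * varY ^ (n - k) \<in> zspan S"
    using assms[of 0 0] by (simp add: witness_tutte_0 zspan_superset)
  moreover have "(1 - Xm1 * Ym1) * (varX ^ i * varY ^ j) \<in> zspan S"
    if "i < k" "j < n - k" for i j
  proof -
    define a b where "a = k - i" and "b = n - k - j"
    then have "1 \<le> a" "a \<le> k" "1 \<le> b" "k + b \<le> n" "i = k - a" "j = n - k - b"
      using that by auto
    moreover have "witness_tutte n k a b - witness_tutte n k (a - 1) b - witness_tutte n k a (b - 1)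
                     + witness_tutte n k (a - 1) (b - 1) \<in> zspan S"
      using calculation by (intro zspan_add zspan_diff zspan_superset assms) auto
    ultimately show ?thesis
      using witness_tutte_second_difference[of a k b n] by simp
  qed
  ultimately show ?thesis unfolding witness_basis_def by auto
qed

lemma zrank_zspan_tutte_family:
  assumes "\<And>p. p \<in> S \<Longrightarrow> \<exists>I. hereditary I \<and> mrank I {..<n} = k \<and> p = tutte I {..<n}"
    and "\<And>a b. a \<le> k \<Longrightarrow> b \<le> n - k \<Longrightarrow> witness_tutte n k a b \<in> S"
  shows "zrank (zspan S) = k * (n - k) + 1"
  using card_zindep_tutte_le[OF assms(1)] witness_basis_subset_zspan[OF assms(2)]
    zindep_witness_basis card_witness_basis
  by (rule zrank_eqI)

section \<open>Binary and graphic realisations\<close>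

lemma witness_indepI:
  assumes "\<And>e. e \<in> A \<Longrightarrow> e < k + b"
    and "\<And>e e'. e \<in> A \<Longrightarrow> e' \<in> A \<Longrightarrow> k \<le> e \<Longrightarrow> k \<le> e' \<Longrightarrow> e = e'"
    and "\<And>e. e \<in> A \<Longrightarrow> k \<le> e \<Longrightarrow> \<not> {..<a} \<subseteq> A"
  shows "witness_indep k a b A"
proof -
  have "card (A \<inter> {k..<k+b}) \<le> 1"
    using assms(2) card_le_Suc0_iff_eq[of "A \<inter> {k..<k+b}"] by auto
  moreover have "A \<subseteq> {..<k+b}" using assms(1) by auto
  moreover have "\<not> ({..<a} \<subseteq> A \<and> A \<inter> {k..<k+b} \<noteq> {})" using assms(3) by auto
  ultimately show ?thesis
    unfolding witness_indep_def by blast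
qed

lemma
  assumes "witness_indep k a b A"
  shows witness_indep_below: "e \<in> A \<Longrightarrow> e < k + b"
    and witness_indep_parallel_unique: "e \<in> A \<Longrightarrow> e' \<in> A \<Longrightarrow> k \<le> e \<Longrightarrow> k \<le> e' \<Longrightarrow> e = e'"
    and witness_indep_basis_gap: "e \<in> A \<Longrightarrow> k \<le> e \<Longrightarrow> \<exists>f<a. f \<notin> A"
proof -
  show below: "e < k + b" if "e \<in> A" for e
    using assms that by (auto simp: witness_indep_def)
  show "e = e'" if "e \<in> A" "e' \<in> A" "k \<le> e" "k \<le> e'"
  proof -
    have "e \<in> A \<inter> {k..<k+b}" "e' \<in> A \<inter> {k..<k+b}" using that below by auto
    then show ?thesis
      using assms card_le_Suc0_iff_eq[of "A \<inter> {k..<k+b}"] by (auto simp: witness_indep_def)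
  qed
  show "\<exists>f<a. f \<notin> A" if "e \<in> A" "k \<le> e"
    using assms that below[OF that(1)] by (auto simp: witness_indep_def)
qed

definition witness_vectors :: "nat \<Rightarrow> nat \<Rightarrow> nat \<Rightarrow> nat \<Rightarrow> nat set" where
  "witness_vectors k a b e = (if e < k then {e} else if e < k + b then {..<a} else {})"

lemma not_bin_indep:
  assumes "B \<subseteq> A" "B \<noteq> {}" "\<And>i. even (card {e \<in> B. i \<in> v e})"
  shows "\<not> bin_indep v A"
  using assms unfolding bin_indep_def by blast

lemma witness_indep_imp_bin_indep:
  assumes "witness_indep k a b A"
  shows "bin_indep (witness_vectors k a b) A"
  unfolding bin_indep_def
proof (intro allI impI)
  let ?v = "witness_vectors k a b"
  fix B assume B: "B \<subseteq> A" "B \<noteq> {}"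
  have "\<exists>i e. {e' \<in> B. i \<in> ?v e'} = {e}"
  proof (cases "\<exists>e\<in>B. k \<le> e")
    case True
    then obtain e where e: "e \<in> B" "k \<le> e" by blast
    then obtain f where f: "f < a" "f \<notin> A"
      using witness_indep_basis_gap[OF assms] B by blast
    have "e' = e" if "e' \<in> B" "f \<in> ?v e'" for e'
      using that f e B witness_indep_parallel_unique[OF assms, of e e']
      by (auto simp: witness_vectors_def split: if_splits)
    moreover have "f \<in> ?v e"
      using e f witness_indep_below[OF assms, of e] B by (auto simp: witness_vectors_def)
    ultimately show ?thesis using e(1) by blast
  next
    case False
    then obtain e where e: "e \<in> B" "e < k" using B(2) by force
    then have "{e' \<in> B. e \<in> ?v e'} = {e}"
      using False by (auto simp: witness_vectors_def split: if_splits)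
    then show ?thesis by blast
  qed
  then obtain i e where "{e' \<in> B. i \<in> ?v e'} = {e}" by blast
  then have "odd (card {e' \<in> B. i \<in> ?v e'})" by simp
  then show "{i. odd (card {e \<in> B. i \<in> ?v e})} \<noteq> {}" by blast
qed

lemma bin_indep_imp_witness_indep:
  assumes "a \<le> k" "bin_indep (witness_vectors k a b) A"
  shows "witness_indep k a b A"
proof (rule witness_indepI)
  let ?v = "witness_vectors k a b"
  show below: "e < k + b" if "e \<in> A" for e
  proof (rule ccontr)
    assume "\<not> e < k + b"
    then have "even (card {e' \<in> {e}. i \<in> ?v e'})" for i by (simp add: witness_vectors_def)
    then show False using not_bin_indep[of "{e}" A ?v] that assms(2) by blast
  qed
  show "e = e'" if "e \<in> A" "e' \<in> A" "k \<le> e" "k \<le> e'" for e e'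
  proof (rule ccontr)
    assume "e \<noteq> e'"
    moreover have "e < k + b" "e' < k + b" using that below by auto
    ultimately have "{g \<in> {e, e'}. i \<in> ?v g} = (if i < a then {e, e'} else {})" for i
      using that by (auto simp: witness_vectors_def)
    then have "even (card {g \<in> {e, e'}. i \<in> ?v g})" for i using \<open>e \<noteq> e'\<close> by simp
    then show False using not_bin_indep[of "{e, e'}" A ?v] that assms(2) by blast
  qed
  show "\<not> {..<a} \<subseteq> A" if "e \<in> A" "k \<le> e" for e
  proof
    assume "{..<a} \<subseteq> A"
    have "e < k + b" using that below by auto
    then have "{g \<in> insert e {..<a}. i \<in> ?v g} = (if i < a then {i, e} else {})" for i
      using that assms(1) by (auto simp: witness_vectors_def)
    moreover have "i \<noteq> e" if "i < a" for i using that \<open>k \<le> e\<close> assms(1) by simp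
    ultimately have "even (card {g \<in> insert e {..<a}. i \<in> ?v g})" for i by simp
    then show False
      using not_bin_indep[of "insert e {..<a}" A ?v] that assms(2) \<open>{..<a} \<subseteq> A\<close> by blast
  qed
qed

lemma bin_indep_witness_vectors:
  "a \<le> k \<Longrightarrow> bin_indep (witness_vectors k a b) = witness_indep k a b"
  using witness_indep_imp_bin_indep bin_indep_imp_witness_indep by blast

lemma rtranclp_adj_cut:
  assumes "\<forall>g\<in>A. fst (G g) \<in> S \<longleftrightarrow> snd (G g) \<in> S" "(adj G A)\<^sup>*\<^sup>* x y" "x \<in> S"
  shows "y \<in> S"
  using assms(2,3)
proof (induction rule: rtranclp_induct)
  case (step y z)
  then show ?case using assms(1) unfolding adj_def by auto
qed

definition isolating_cut :: "(nat \<Rightarrow> nat \<times> nat) \<Rightarrow> nat set \<Rightarrow> nat \<Rightarrow> nat set \<Rightarrow> bool" where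
  "isolating_cut G A e S \<longleftrightarrow>
     (\<forall>g\<in>A - {e}. fst (G g) \<in> S \<longleftrightarrow> snd (G g) \<in> S) \<and> fst (G e) \<in> S \<and> snd (G e) \<notin> S"

lemma graph_indep_if_cuts:
  assumes "\<And>e. e \<in> A \<Longrightarrow> \<exists>S. isolating_cut G A e S"
  shows "graph_indep G A"
  unfolding graph_indep_def
proof (intro ballI notI)
  fix e assume "e \<in> A" and path: "(adj G (A - {e}))\<^sup>*\<^sup>* (fst (G e)) (snd (G e))"
  then obtain S where S: "\<forall>g\<in>A - {e}. fst (G g) \<in> S \<longleftrightarrow> snd (G g) \<in> S"
    "fst (G e) \<in> S" "snd (G e) \<notin> S" using assms unfolding isolating_cut_def by blast
  show False using rtranclp_adj_cut[OF S(1) path S(2)] S(3) by blast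
qed

definition witness_graph :: "nat \<Rightarrow> nat \<Rightarrow> nat \<Rightarrow> nat \<Rightarrow> nat \<times> nat" where
  "witness_graph k a b e = (if e < k then (e, Suc e) else if e < k + b then (0, a) else (0, 0))"

lemma witness_graph_path:
  "{..<j} \<subseteq> A \<Longrightarrow> j \<le> k \<Longrightarrow> (adj (witness_graph k a b) A)\<^sup>*\<^sup>* 0 j"
proof (induction j)
  case (Suc j)
  then have "adj (witness_graph k a b) A j (Suc j)"
    unfolding adj_def by (intro bexI[of _ j]) (auto simp: witness_graph_def)
  moreover have "(adj (witness_graph k a b) A)\<^sup>*\<^sup>* 0 j"
    using Suc by (intro Suc.IH) auto
  ultimately show ?case by (simp add: rtranclp.rtrancl_into_rtrancl)
qed simp

lemma witness_graph_cut_path_edge: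
  assumes "a \<le> k" "witness_indep k a b A" "e \<in> A" "e < k"
  shows "\<exists>S. isolating_cut (witness_graph k a b) A e S"
proof (cases "(\<forall>g\<in>A. g < k) \<or> a \<le> e")
  case True
  show ?thesis
    by (rule exI[of _ "{v. v \<le> e}"])
      (use True assms(4) witness_indep_below[OF assms(2)] in
        \<open>auto simp: isolating_cut_def witness_graph_def\<close>)
next
  case parallel: False
  then obtain f where f: "f < a" "f \<notin> A" using witness_indep_basis_gap[OF assms(2)] by force
  then have "f \<noteq> e" and not_f: "\<And>g. g \<in> A \<Longrightarrow> g \<noteq> f" using assms(3) by auto
  \<comment> \<open>The ends 0 and a of the parallel edges must lie on the same side, so the cut also
    crosses the path at the missing edge f.\<close>
  show ?thesis
  proof (cases "e < f")
    case True
    show ?thesis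
      by (rule exI[of _ "{v. v \<le> e \<or> f < v}"])
        (use True assms f parallel not_f witness_indep_below[OF assms(2)] in
          \<open>auto simp: isolating_cut_def witness_graph_def less_Suc_eq\<close>)
  next
    case False
    show ?thesis
      by (rule exI[of _ "{v. f < v \<and> v \<le> e}"])
        (use False assms f parallel not_f witness_indep_below[OF assms(2)] \<open>f \<noteq> e\<close> in
          \<open>auto simp: isolating_cut_def witness_graph_def less_Suc_eq\<close>)
  qed
qed

lemma witness_graph_cut:
  assumes "a \<le> k" "witness_indep k a b A" "e \<in> A"
  shows "\<exists>S. isolating_cut (witness_graph k a b) A e S"
proof (cases "e < k")
  case False
  then obtain f where f: "f < a" "f \<notin> A"
    using witness_indep_basis_gap[OF assms(2,3)] by auto
  let ?G = "witness_graph k a b"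
  have "fst (?G g) \<le> f \<longleftrightarrow> snd (?G g) \<le> f" if "g \<in> A - {e}" for g
  proof -
    have "g < k" "g \<noteq> f"
      using that f False witness_indep_parallel_unique[OF assms(2,3), of g] by force+
    then show ?thesis by (simp add: witness_graph_def) arith
  qed
  then show ?thesis
    using False witness_indep_below[OF assms(2,3)] f
    by (intro exI[of _ "{v. v \<le> f}"]) (auto simp: isolating_cut_def witness_graph_def)
qed (use assms witness_graph_cut_path_edge in blast)

lemma graph_indep_imp_witness_indep:
  assumes "a \<le> k" "graph_indep (witness_graph k a b) A"
  shows "witness_indep k a b A"
proof -
  let ?G = "witness_graph k a b"
  have dep: False if "e \<in> A" "(adj ?G (A - {e}))\<^sup>*\<^sup>* (fst (?G e)) (snd (?G e))" for e
    using assms(2) that unfolding graph_indep_def by blast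
  show ?thesis
  proof (rule witness_indepI)
    show below: "e < k + b" if "e \<in> A" for e
      using dep[OF that] by (cases "e < k + b") (auto simp: witness_graph_def)
    show "e = e'" if "e \<in> A" "e' \<in> A" "k \<le> e" "k \<le> e'" for e e'
    proof (rule ccontr)
      assume "e \<noteq> e'"
      then have "adj ?G (A - {e}) 0 a"
        unfolding adj_def using that below[of e'] by (intro bexI[of _ e']) (auto simp: witness_graph_def)
      then show False using dep[of e] that below[of e] by (auto simp: witness_graph_def)
    qed
    show "\<not> {..<a} \<subseteq> A" if "e \<in> A" "k \<le> e" for e
    proof
      assume "{..<a} \<subseteq> A"
      then have "{..<a} \<subseteq> A - {e}" using that assms(1) by auto
      then have "(adj ?G (A - {e}))\<^sup>*\<^sup>* 0 a" using assms(1) by (rule witness_graph_path)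
      then show False using dep[of e] that below[of e] by (auto simp: witness_graph_def)
    qed
  qed
qed

lemma graph_indep_witness_graph:
  assumes "a \<le> k"
  shows "graph_indep (witness_graph k a b) = witness_indep k a b"
proof (intro ext iffI)
  fix A
  show "graph_indep (witness_graph k a b) A \<Longrightarrow> witness_indep k a b A"
    using assms by (rule graph_indep_imp_witness_indep)
  show "witness_indep k a b A \<Longrightarrow> graph_indep (witness_graph k a b) A"
    by (rule graph_indep_if_cuts) (rule witness_graph_cut[OF assms])
qed

lemma hereditary_bin_indep: "hereditary (bin_indep v)"
  unfolding hereditary_def bin_indep_def by auto

lemma hereditary_graph_indep: "hereditary (graph_indep G)"
  unfolding hereditary_def graph_indep_def
proof (intro conjI allI impI ballI notI)
  fix B C e
  assume B: "\<forall>e\<in>B. \<not> (adj G (B - {e}))\<^sup>*\<^sup>* (fst (G e)) (snd (G e))" and "C \<subseteq> B" "e \<in> C"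
    and "(adj G (C - {e}))\<^sup>*\<^sup>* (fst (G e)) (snd (G e))"
  moreover have "adj G (C - {e}) \<le> adj G (B - {e})"
    using \<open>C \<subseteq> B\<close> unfolding adj_def by blast
  ultimately have "(adj G (B - {e}))\<^sup>*\<^sup>* (fst (G e)) (snd (G e))"
    using rtranclp_mono by blast
  then show False using B \<open>C \<subseteq> B\<close> \<open>e \<in> C\<close> by blast
qed simp

lemma mrank_witness_indep_full:
  assumes "a \<le> k" "k \<le> n"
  shows "mrank (witness_indep k a b) {..<n} = k"
proof -
  have "{..<n} \<inter> {..<k} = {..<k}" "{..<a} \<subseteq> {..<n}" using assms by auto
  then show ?thesis by (simp add: mrank_witness_indep[OF assms(1)] witness_rank_def)
qed

lemma witness_tutte_binary:
  assumes "a \<le> k" "b \<le> n - k" "k \<le> n"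
  shows "witness_tutte n k a b \<in> binary_tutte_polys n k"
  unfolding binary_tutte_polys_def
  using assms mrank_witness_indep_full[of a k n b] tutte_witness_indep[of a k b n]
  by (intro CollectI exI[of _ "witness_vectors k a b"]) (simp add: bin_indep_witness_vectors)

lemma witness_tutte_graphic:
  assumes "a \<le> k" "b \<le> n - k" "k \<le> n"
  shows "witness_tutte n k a b \<in> graphic_tutte_polys n k"
  unfolding graphic_tutte_polys_def
  using assms mrank_witness_indep_full[of a k n b] tutte_witness_indep[of a k b n]
  by (intro CollectI exI[of _ "witness_graph k a b"]) (simp add: graph_indep_witness_graph)

theorem corollary4p14:
  fixes n k :: nat
  assumes "k \<le> n"
  shows "zrank (zspan (binary_tutte_polys n k)) = k * (n - k) + 1
       \<and> zrank (zspan (graphic_tutte_polys n k)) = k * (n - k) + 1"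
proof
  show "zrank (zspan (binary_tutte_polys n k)) = k * (n - k) + 1"
  proof (rule zrank_zspan_tutte_family)
    show "\<exists>I. hereditary I \<and> mrank I {..<n} = k \<and> p = tutte I {..<n}"
      if "p \<in> binary_tutte_polys n k" for p
      using that hereditary_bin_indep unfolding binary_tutte_polys_def by blast
  qed (use assms witness_tutte_binary in auto)
  show "zrank (zspan (graphic_tutte_polys n k)) = k * (n - k) + 1"
  proof (rule zrank_zspan_tutte_family)
    show "\<exists>I. hereditary I \<and> mrank I {..<n} = k \<and> p = tutte I {..<n}"
      if "p \<in> graphic_tutte_polys n k" for p
      using that hereditary_graph_indep unfolding graphic_tutte_polys_def by blast
  qed (use assms witness_tutte_graphic in auto)
qed

end
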